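(* Let $P$ be a conical refinement monoid containing order-ideals $I,I'$ with $I\cap I'=0$, and let $\varphi\colon I\to I'$ be a monoid isomorphism. Let $Q$ be the crowned pushout of $(P,I,I',\varphi)$. Then $Q=P/\!\sim$, where $\sim$ is the congruence on $P$ generated by $x+i\sim x+\varphi(i)$ for $i\in I$, $x\in P$, with the coequalizing map the canonical projection $\pi\colon P\to Q$. Moreover $Q$ is a conical refinement monoid, and $Q$ contains an order-ideal $Z$ isomorphic to $I$ such that $\pi$ induces an isomorphism $P/(I+I')\cong Q/Z$.
   Context: Monoids are abelian; conical means $x+y=0\Rightarrow x=y=0$; refinement monoid means every $x_1+x_2=y_1+y_2$ admits $x_{ij}$ with $x_i=x_{i1}+x_{i2}$, $y_j=x_{1j}+x_{2j}$. An order-ideal is a nonempty $I\subseteq P$ with $x+y\in I\iff x,y\in I$; $P/I$ denotes the quotient by $x\equiv y\iff x+u=y+v$ for some $u,v\in I$. The crowned pushout of $(P,I,I',\varphi)$ is the coequalizer, in the category of monoids, of the inclusion $I\to P$ and the composite $I\xrightarrow{\varphi}I'\hookrightarrow P$: a homomorphism $f\colon P\to Q$ with $f(x)=f(\varphi(x))$ for all $x\in I$, through which every homomorphism $g$ with $g(x)=g(\varphi(x))$ ($x\in I$) factors uniquely. *)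

theory Defs
  imports "HOL-Algebra.Algebra"
begin

text \<open>Abelian monoids are HOL-Algebra commutative monoids (written multiplicatively).\<close>

definition conical :: "('a,'b) monoid_scheme \<Rightarrow> bool" where
  "conical P \<longleftrightarrow> (\<forall>x\<in>carrier P. \<forall>y\<in>carrier P.
      x \<otimes>\<^bsub>P\<^esub> y = \<one>\<^bsub>P\<^esub> \<longrightarrow> x = \<one>\<^bsub>P\<^esub> \<and> y = \<one>\<^bsub>P\<^esub>)"

definition refinement_monoid :: "('a,'b) monoid_scheme \<Rightarrow> bool" where
  "refinement_monoid P \<longleftrightarrow> comm_monoid P \<and>
    (\<forall>x1\<in>carrier P. \<forall>x2\<in>carrier P. \<forall>y1\<in>carrier P. \<forall>y2\<in>carrier P.
      x1 \<otimes>\<^bsub>P\<^esub> x2 = y1 \<otimes>\<^bsub>P\<^esub> y2 \<longrightarrow>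
      (\<exists>x11\<in>carrier P. \<exists>x12\<in>carrier P. \<exists>x21\<in>carrier P. \<exists>x22\<in>carrier P.
         x1 = x11 \<otimes>\<^bsub>P\<^esub> x12 \<and> x2 = x21 \<otimes>\<^bsub>P\<^esub> x22 \<and>
         y1 = x11 \<otimes>\<^bsub>P\<^esub> x21 \<and> y2 = x12 \<otimes>\<^bsub>P\<^esub> x22))"

definition order_ideal :: "('a,'b) monoid_scheme \<Rightarrow> 'a set \<Rightarrow> bool" where
  "order_ideal P I \<longleftrightarrow> I \<subseteq> carrier P \<and> I \<noteq> {} \<and>
     (\<forall>x\<in>carrier P. \<forall>y\<in>carrier P. x \<otimes>\<^bsub>P\<^esub> y \<in> I \<longleftrightarrow> x \<in> I \<and> y \<in> I)"

definition mon_congruence :: "('a,'b) monoid_scheme \<Rightarrow> ('a \<times> 'a) set \<Rightarrow> bool" where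
  "mon_congruence P R \<longleftrightarrow> equiv (carrier P) R \<and>
     (\<forall>(a,b)\<in>R. \<forall>c\<in>carrier P. (a \<otimes>\<^bsub>P\<^esub> c, b \<otimes>\<^bsub>P\<^esub> c) \<in> R \<and> (c \<otimes>\<^bsub>P\<^esub> a, c \<otimes>\<^bsub>P\<^esub> b) \<in> R)"

definition gen_congruence :: "('a,'b) monoid_scheme \<Rightarrow> ('a \<times> 'a) set \<Rightarrow> ('a \<times> 'a) set" where
  "gen_congruence P S = \<Inter>{R. mon_congruence P R \<and> S \<subseteq> R}"

definition quot_monoid :: "('a,'b) monoid_scheme \<Rightarrow> ('a \<times> 'a) set \<Rightarrow> 'a set monoid" where
  "quot_monoid P R = \<lparr>carrier = carrier P // R,
     monoid.mult = (\<lambda>A B. \<Union>a\<in>A. \<Union>b\<in>B. R `` {a \<otimes>\<^bsub>P\<^esub> b}),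
     monoid.one = R `` {\<one>\<^bsub>P\<^esub>}\<rparr>"

definition ideal_rel :: "('a,'b) monoid_scheme \<Rightarrow> 'a set \<Rightarrow> ('a \<times> 'a) set" where
  "ideal_rel P I = {(x,y). x \<in> carrier P \<and> y \<in> carrier P \<and>
      (\<exists>u\<in>I. \<exists>v\<in>I. x \<otimes>\<^bsub>P\<^esub> u = y \<otimes>\<^bsub>P\<^esub> v)}"

definition ideal_quot :: "('a,'b) monoid_scheme \<Rightarrow> 'a set \<Rightarrow> 'a set monoid" where
  "ideal_quot P I = quot_monoid P (ideal_rel P I)"

definition set_sum :: "('a,'b) monoid_scheme \<Rightarrow> 'a set \<Rightarrow> 'a set \<Rightarrow> 'a set" where
  "set_sum P I J = {i \<otimes>\<^bsub>P\<^esub> j | i j. i \<in> I \<and> j \<in> J}"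

definition crown_rel :: "('a,'b) monoid_scheme \<Rightarrow> 'a set \<Rightarrow> ('a \<Rightarrow> 'a) \<Rightarrow> ('a \<times> 'a) set" where
  "crown_rel P I \<phi> = gen_congruence P
     {(x \<otimes>\<^bsub>P\<^esub> i, x \<otimes>\<^bsub>P\<^esub> \<phi> i) | x i. x \<in> carrier P \<and> i \<in> I}"

definition crown_quot :: "('a,'b) monoid_scheme \<Rightarrow> 'a set \<Rightarrow> ('a \<Rightarrow> 'a) \<Rightarrow> 'a set monoid" where
  "crown_quot P I \<phi> = quot_monoid P (crown_rel P I \<phi>)"

definition crown_proj :: "('a,'b) monoid_scheme \<Rightarrow> 'a set \<Rightarrow> ('a \<Rightarrow> 'a) \<Rightarrow> 'a \<Rightarrow> 'a set" where
  "crown_proj P I \<phi> = (\<lambda>x. crown_rel P I \<phi> `` {x})"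

text \<open>Crowned pushout (coequalizer of I -> P and I -> I' -> P in abelian monoids), with
  the universal property tested against all commutative monoids whose elements have type 'r.
  Used with a free type variable 'r in a conclusion, this gives the property for all types.\<close>

definition crowned_pushout ::
  "'r itself \<Rightarrow> ('a,'b) monoid_scheme \<Rightarrow> 'a set \<Rightarrow> 'a set \<Rightarrow> ('a \<Rightarrow> 'a)
     \<Rightarrow> ('q,'c) monoid_scheme \<Rightarrow> ('a \<Rightarrow> 'q) \<Rightarrow> bool" where
  "crowned_pushout T P I I' \<phi> Q f \<longleftrightarrow>
     \<phi> ` I \<subseteq> I' \<and> comm_monoid Q \<and> f \<in> hom P Q \<and> (\<forall>x\<in>I. f x = f (\<phi> x)) \<and>
     (\<forall>R :: 'r monoid. comm_monoid R \<longrightarrow>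
        (\<forall>g\<in>hom P R. (\<forall>x\<in>I. g x = g (\<phi> x)) \<longrightarrow>
           (\<exists>h\<in>hom Q R. (\<forall>x\<in>carrier P. h (f x) = g x) \<and>
              (\<forall>h'\<in>hom Q R. (\<forall>x\<in>carrier P. h' (f x) = g x) \<longrightarrow>
                 (\<forall>y\<in>carrier Q. h' y = h y)))))"

end

theory Submission
  imports Defs
begin

text \<open>
  Refinement makes every element of \<open>I + I'\<close> uniquely of the form \<open>a + a'\<close>, so
  the collapsing map \<open>a + a' \<mapsto> a + \<phi>\<^sup>-\<^sup>1(a')\<close> is a homomorphism \<open>I + I' \<rightarrow> I\<close>. The key step is
  an explicit description of the congruence generated by \<open>x + i \<sim> x + \<phi>(i)\<close>: it relates
  \<open>p + u\<close> and \<open>p + v\<close> whenever \<open>u, v \<in> I + I'\<close> have equal collapses. With this description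
  all claims about \<open>Q = P/\<sim>\<close> reduce to computations in \<open>P\<close>: refinement and conicality pass
  to \<open>Q\<close>, the image \<open>Z\<close> of \<open>I\<close> is an order-ideal isomorphic to \<open>I\<close>, and \<open>\<sim>\<close> reflects
  congruence modulo \<open>I + I'\<close> onto congruence modulo \<open>Z\<close>, giving \<open>P/(I + I') \<cong> Q/Z\<close>.
\<close>

section \<open>Congruences and quotient monoids\<close>

lemma mon_congruence_equiv: "mon_congruence P R \<Longrightarrow> equiv (carrier P) R"
  by (simp add: mon_congruence_def)

lemma mon_congruence_carrier:
  "mon_congruence P R \<Longrightarrow> (x, y) \<in> R \<Longrightarrow> x \<in> carrier P \<and> y \<in> carrier P"
  unfolding mon_congruence_def equiv_def refl_on_def by blast

lemma mon_congruence_mult: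
  assumes R: "mon_congruence P R" and "(a, b) \<in> R" "(c, d) \<in> R"
  shows "(a \<otimes>\<^bsub>P\<^esub> c, b \<otimes>\<^bsub>P\<^esub> d) \<in> R"
proof -
  have "(a \<otimes>\<^bsub>P\<^esub> c, b \<otimes>\<^bsub>P\<^esub> c) \<in> R" "(b \<otimes>\<^bsub>P\<^esub> c, b \<otimes>\<^bsub>P\<^esub> d) \<in> R"
    using assms mon_congruence_carrier[OF R] unfolding mon_congruence_def by blast+
  then show ?thesis
    using mon_congruence_equiv[OF R] by (meson equiv_def transD)
qed

lemma mon_congruence_class_eq:
  "mon_congruence P R \<Longrightarrow> x \<in> carrier P \<Longrightarrow> y \<in> carrier P \<Longrightarrow> R `` {x} = R `` {y} \<longleftrightarrow> (x, y) \<in> R"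
  by (metis mon_congruence_equiv equiv_class_eq_iff)

lemma quot_carrier_iff: "A \<in> carrier (quot_monoid P R) \<longleftrightarrow> (\<exists>x\<in>carrier P. A = R `` {x})"
  by (auto simp: quot_monoid_def quotient_def)

lemma quot_cases:
  assumes "A \<in> carrier (quot_monoid P R)"
  obtains x where "x \<in> carrier P" "A = R `` {x}"
  using assms quot_carrier_iff by metis

lemma quot_class_closed: "x \<in> carrier P \<Longrightarrow> R `` {x} \<in> carrier (quot_monoid P R)"
  using quot_carrier_iff by metis

lemma quot_one: "\<one>\<^bsub>quot_monoid P R\<^esub> = R `` {\<one>\<^bsub>P\<^esub>}"
  by (simp add: quot_monoid_def)

lemma quot_mult_class:
  assumes R: "mon_congruence P R" and "x \<in> carrier P" "y \<in> carrier P"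
  shows "R `` {x} \<otimes>\<^bsub>quot_monoid P R\<^esub> R `` {y} = R `` {x \<otimes>\<^bsub>P\<^esub> y}"
proof -
  have eqv: "equiv (carrier P) R" by (rule mon_congruence_equiv[OF R])
  have "R `` {a \<otimes>\<^bsub>P\<^esub> b} = R `` {x \<otimes>\<^bsub>P\<^esub> y}" if "a \<in> R `` {x}" "b \<in> R `` {y}" for a b
    using mon_congruence_mult[OF R, of x a y b] that equiv_class_eq[OF eqv] by auto
  moreover have "x \<in> R `` {x}" "y \<in> R `` {y}"
    using equiv_class_self[OF eqv] assms(2,3) by auto
  ultimately have "(\<Union>a\<in>R `` {x}. \<Union>b\<in>R `` {y}. R `` {a \<otimes>\<^bsub>P\<^esub> b}) = R `` {x \<otimes>\<^bsub>P\<^esub> y}"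
    by blast
  then show ?thesis
    by (simp add: quot_monoid_def)
qed

lemma quot_comm_monoid:
  assumes P: "comm_monoid P" and R: "mon_congruence P R"
  shows "comm_monoid (quot_monoid P R)"
proof -
  interpret comm_monoid P by fact
  note cls = quot_mult_class[OF R]
  show ?thesis
  proof (rule comm_monoidI)
    fix x y assume "x \<in> carrier (quot_monoid P R)" "y \<in> carrier (quot_monoid P R)"
    then show "x \<otimes>\<^bsub>quot_monoid P R\<^esub> y \<in> carrier (quot_monoid P R)"
      by (elim quot_cases) (simp add: cls quot_class_closed)
  next
    show "\<one>\<^bsub>quot_monoid P R\<^esub> \<in> carrier (quot_monoid P R)"
      by (simp add: quot_one quot_class_closed)
  next
    fix x y z assume "x \<in> carrier (quot_monoid P R)" "y \<in> carrier (quot_monoid P R)"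
      "z \<in> carrier (quot_monoid P R)"
    then show "x \<otimes>\<^bsub>quot_monoid P R\<^esub> y \<otimes>\<^bsub>quot_monoid P R\<^esub> z
        = x \<otimes>\<^bsub>quot_monoid P R\<^esub> (y \<otimes>\<^bsub>quot_monoid P R\<^esub> z)"
      by (elim quot_cases) (simp add: cls m_assoc)
  next
    fix x assume "x \<in> carrier (quot_monoid P R)"
    then show "\<one>\<^bsub>quot_monoid P R\<^esub> \<otimes>\<^bsub>quot_monoid P R\<^esub> x = x"
      by (elim quot_cases) (simp add: cls quot_one)
  next
    fix x y assume "x \<in> carrier (quot_monoid P R)" "y \<in> carrier (quot_monoid P R)"
    then show "x \<otimes>\<^bsub>quot_monoid P R\<^esub> y = y \<otimes>\<^bsub>quot_monoid P R\<^esub> x"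
      by (elim quot_cases) (simp add: cls m_comm)
  qed
qed

lemma quot_proj_hom:
  "mon_congruence P R \<Longrightarrow> monoid P \<Longrightarrow> (\<lambda>x. R `` {x}) \<in> hom P (quot_monoid P R)"
  by (rule homI) (auto simp: quot_class_closed quot_mult_class)

lemma gen_congruence_eqI:
  assumes "mon_congruence P R" "S \<subseteq> R"
    and "\<And>R'. mon_congruence P R' \<Longrightarrow> S \<subseteq> R' \<Longrightarrow> R \<subseteq> R'"
  shows "gen_congruence P S = R"
  unfolding gen_congruence_def using assms by blast

lemma kernel_congruence:
  assumes "monoid P" "g \<in> hom P M"
  shows "mon_congruence P {(x, y). x \<in> carrier P \<and> y \<in> carrier P \<and> g x = g y}"
  unfolding mon_congruence_def
proof (intro conjI)
  show "equiv (carrier P) {(x, y). x \<in> carrier P \<and> y \<in> carrier P \<and> g x = g y}"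
    by (rule equivI) (auto simp: refl_on_def sym_def trans_def)
qed (auto simp: hom_mult[OF assms(2)] monoid.m_closed[OF assms(1)])

lemma quot_factor:
  assumes P: "monoid P" and R: "mon_congruence P R" and g: "g \<in> hom P M"
    and compat: "\<And>x y. (x, y) \<in> R \<Longrightarrow> g x = g y"
  shows "\<exists>h\<in>hom (quot_monoid P R) M. \<forall>x\<in>carrier P. h (R `` {x}) = g x"
proof -
  define h where "h A = g (SOME x. x \<in> A)" for A
  have h_class: "h (R `` {x}) = g x" if x: "x \<in> carrier P" for x
  proof -
    have "x \<in> R `` {x}" using equiv_class_self[OF mon_congruence_equiv[OF R] x] .
    then have "(x, SOME y. y \<in> R `` {x}) \<in> R" by (metis someI Image_singleton_iff)
    then show ?thesis unfolding h_def using compat by metis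
  qed
  have "h \<in> hom (quot_monoid P R) M"
  proof (rule homI)
    fix A assume "A \<in> carrier (quot_monoid P R)"
    then show "h A \<in> carrier M"
      by (elim quot_cases) (simp add: h_class hom_in_carrier[OF g])
  next
    fix A B assume "A \<in> carrier (quot_monoid P R)" "B \<in> carrier (quot_monoid P R)"
    then show "h (A \<otimes>\<^bsub>quot_monoid P R\<^esub> B) = h A \<otimes>\<^bsub>M\<^esub> h B"
      by (elim quot_cases)
        (simp add: quot_mult_class[OF R] h_class hom_mult[OF g] monoid.m_closed[OF P])
  qed
  then show ?thesis using h_class by blast
qed

lemma quot_induced_iso:
  assumes P: "monoid P" and E: "mon_congruence P E" and F: "mon_congruence Q F"
    and f: "f \<in> hom P Q" and onto: "f ` carrier P = carrier Q"
    and reflect: "\<And>x y. x \<in> carrier P \<Longrightarrow> y \<in> carrier P \<Longrightarrow> (x, y) \<in> E \<longleftrightarrow> (f x, f y) \<in> F"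
  shows "\<exists>\<psi>\<in>iso (quot_monoid P E) (quot_monoid Q F). \<forall>x\<in>carrier P. \<psi> (E `` {x}) = F `` {f x}"
proof -
  have fc: "f x \<in> carrier Q" if "x \<in> carrier P" for x
    using hom_in_carrier[OF f that] .
  have g: "(\<lambda>x. F `` {f x}) \<in> hom P (quot_monoid Q F)"
    by (rule homI) (simp_all add: fc quot_class_closed hom_mult[OF f] quot_mult_class[OF F])
  have compat: "F `` {f x} = F `` {f y}" if "(x, y) \<in> E" for x y
  proof -
    have "x \<in> carrier P" "y \<in> carrier P" using mon_congruence_carrier[OF E that] by auto
    then show ?thesis using that reflect mon_congruence_class_eq[OF F] fc by simp
  qed
  obtain \<psi> where \<psi>: "\<psi> \<in> hom (quot_monoid P E) (quot_monoid Q F)"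
      and \<psi>_class: "\<forall>x\<in>carrier P. \<psi> (E `` {x}) = F `` {f x}"
    using quot_factor[OF P E g compat] by blast
  have "inj_on \<psi> (carrier (quot_monoid P E))"
  proof (rule inj_onI)
    fix A B assume A: "A \<in> carrier (quot_monoid P E)" and B: "B \<in> carrier (quot_monoid P E)"
      and eq: "\<psi> A = \<psi> B"
    obtain x where x: "x \<in> carrier P" "A = E `` {x}" using A by (rule quot_cases)
    obtain y where y: "y \<in> carrier P" "B = E `` {y}" using B by (rule quot_cases)
    have "F `` {f x} = F `` {f y}" using eq x y \<psi>_class by simp
    then have "(x, y) \<in> E" using mon_congruence_class_eq[OF F] fc reflect x y by blast
    then show "A = B" using mon_congruence_class_eq[OF E] x y by blast
  qed
  moreover have "\<psi> ` carrier (quot_monoid P E) = carrier (quot_monoid Q F)"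
  proof
    show "\<psi> ` carrier (quot_monoid P E) \<subseteq> carrier (quot_monoid Q F)"
      using hom_carrier[OF \<psi>] .
    show "carrier (quot_monoid Q F) \<subseteq> \<psi> ` carrier (quot_monoid P E)"
    proof
      fix B assume "B \<in> carrier (quot_monoid Q F)"
      then obtain x where "x \<in> carrier P" "B = F `` {f x}"
        using onto by (metis quot_cases imageE)
      then show "B \<in> \<psi> ` carrier (quot_monoid P E)"
        using \<psi>_class quot_class_closed by (metis image_eqI)
    qed
  qed
  ultimately have "\<psi> \<in> iso (quot_monoid P E) (quot_monoid Q F)"
    by (simp add: isoI[OF \<psi>] bij_betw_def)
  then show ?thesis using \<psi>_class by blast
qed

lemma ideal_rel_congruence:
  fixes P (structure)
  assumes P: "comm_monoid P" and S: "S \<subseteq> carrier P" "\<one> \<in> S"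
    "\<And>a b. a \<in> S \<Longrightarrow> b \<in> S \<Longrightarrow> a \<otimes> b \<in> S"
  shows "mon_congruence P (ideal_rel P S)"
proof -
  interpret comm_monoid P by fact
  have refl: "refl_on (carrier P) (ideal_rel P S)"
    unfolding refl_on_def ideal_rel_def using S by blast
  have sym: "sym (ideal_rel P S)"
    unfolding sym_def ideal_rel_def by (auto, metis)
  have trans: "trans (ideal_rel P S)"
  proof (rule transI)
    fix x y z assume "(x, y) \<in> ideal_rel P S" "(y, z) \<in> ideal_rel P S"
    then obtain u v u' v' where h: "x \<in> carrier P" "y \<in> carrier P" "z \<in> carrier P"
      "u \<in> S" "v \<in> S" "u' \<in> S" "v' \<in> S" "x \<otimes> u = y \<otimes> v" "y \<otimes> u' = z \<otimes> v'"
      unfolding ideal_rel_def by auto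
    then have c: "u \<in> carrier P" "v \<in> carrier P" "u' \<in> carrier P" "v' \<in> carrier P"
      using S by auto
    have "x \<otimes> (u \<otimes> u') = (x \<otimes> u) \<otimes> u'"
      using h(1) c by (simp only: m_assoc)
    also have "\<dots> = (y \<otimes> u') \<otimes> v"
      using h(2,8) c by (simp add: m_ac)
    also have "\<dots> = z \<otimes> (v' \<otimes> v)"
      using h(3,9) c by (simp only: m_assoc)
    finally show "(x, z) \<in> ideal_rel P S"
      unfolding ideal_rel_def using h S by blast
  qed
  have compat: "(a \<otimes> c, b \<otimes> c) \<in> ideal_rel P S \<and> (c \<otimes> a, c \<otimes> b) \<in> ideal_rel P S"
    if ab: "(a, b) \<in> ideal_rel P S" and c: "c \<in> carrier P" for a b c
  proof -
    obtain u v where h: "a \<in> carrier P" "b \<in> carrier P" "u \<in> S" "v \<in> S" "a \<otimes> u = b \<otimes> v"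
      using ab unfolding ideal_rel_def by blast
    have uv: "u \<in> carrier P" "v \<in> carrier P" using h S by auto
    have "a \<otimes> c \<otimes> u = c \<otimes> (a \<otimes> u)" using h(1) uv c by (simp add: m_ac)
    also have "\<dots> = b \<otimes> c \<otimes> v" using h(2,5) uv c by (simp add: m_ac)
    finally have "a \<otimes> c \<otimes> u = b \<otimes> c \<otimes> v" .
    then show ?thesis
      unfolding ideal_rel_def using h c by (auto simp: m_comm)
  qed
  have "ideal_rel P S \<subseteq> carrier P \<times> carrier P"
    unfolding ideal_rel_def by auto
  then show ?thesis
    unfolding mon_congruence_def using equivI refl sym trans compat by blast
qed

lemma ideal_rel_absorb:
  assumes "monoid P" "S \<subseteq> carrier P" "\<one>\<^bsub>P\<^esub> \<in> S" "x \<in> carrier P" "s \<in> S"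
  shows "(x \<otimes>\<^bsub>P\<^esub> s, x) \<in> ideal_rel P S"
proof -
  have "s \<in> carrier P" using assms by auto
  then have "(x \<otimes>\<^bsub>P\<^esub> s) \<otimes>\<^bsub>P\<^esub> \<one>\<^bsub>P\<^esub> = x \<otimes>\<^bsub>P\<^esub> s" "x \<otimes>\<^bsub>P\<^esub> s \<in> carrier P"
    using assms by (simp_all add: monoid.r_one monoid.m_closed)
  then show ?thesis
    unfolding ideal_rel_def using assms by blast
qed

section \<open>Refinement monoids and order-ideals\<close>

lemma refinementE:
  fixes P (structure)
  assumes "refinement_monoid P"
    and "x1 \<in> carrier P" "x2 \<in> carrier P" "y1 \<in> carrier P" "y2 \<in> carrier P"
    and "x1 \<otimes> x2 = y1 \<otimes> y2"
  obtains a b c d where "a \<in> carrier P" "b \<in> carrier P" "c \<in> carrier P" "d \<in> carrier P"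
    "x1 = a \<otimes> b" "x2 = c \<otimes> d" "y1 = a \<otimes> c" "y2 = b \<otimes> d"
  using assms unfolding refinement_monoid_def by blast

lemma quot_refinement:
  fixes P (structure)
  assumes ref: "refinement_monoid P" and R: "mon_congruence P R"
    and lift: "\<And>x1 x2 y. x1 \<in> carrier P \<Longrightarrow> x2 \<in> carrier P \<Longrightarrow> (x1 \<otimes> x2, y) \<in> R \<Longrightarrow>
      \<exists>z1 z2. (x1, z1) \<in> R \<and> (x2, z2) \<in> R \<and> z1 \<otimes> z2 = y"
  shows "refinement_monoid (quot_monoid P R)"
proof -
  interpret comm_monoid P using ref by (simp add: refinement_monoid_def)
  let ?Q = "quot_monoid P R"
  have "\<exists>a\<in>carrier ?Q. \<exists>b\<in>carrier ?Q. \<exists>c\<in>carrier ?Q. \<exists>d\<in>carrier ?Q.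
      X1 = a \<otimes>\<^bsub>?Q\<^esub> b \<and> X2 = c \<otimes>\<^bsub>?Q\<^esub> d \<and> Y1 = a \<otimes>\<^bsub>?Q\<^esub> c \<and> Y2 = b \<otimes>\<^bsub>?Q\<^esub> d"
    if X: "X1 \<in> carrier ?Q" "X2 \<in> carrier ?Q" "Y1 \<in> carrier ?Q" "Y2 \<in> carrier ?Q"
      and eq: "X1 \<otimes>\<^bsub>?Q\<^esub> X2 = Y1 \<otimes>\<^bsub>?Q\<^esub> Y2" for X1 X2 Y1 Y2
  proof -
    obtain x1 where x1: "x1 \<in> carrier P" "X1 = R `` {x1}" using X(1) by (rule quot_cases)
    obtain x2 where x2: "x2 \<in> carrier P" "X2 = R `` {x2}" using X(2) by (rule quot_cases)
    obtain y1 where y1: "y1 \<in> carrier P" "Y1 = R `` {y1}" using X(3) by (rule quot_cases)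
    obtain y2 where y2: "y2 \<in> carrier P" "Y2 = R `` {y2}" using X(4) by (rule quot_cases)
    have "R `` {x1 \<otimes> x2} = R `` {y1 \<otimes> y2}"
      using eq x1 x2 y1 y2 by (simp add: quot_mult_class[OF R])
    then have "(x1 \<otimes> x2, y1 \<otimes> y2) \<in> R"
      using x1 x2 y1 y2 mon_congruence_class_eq[OF R] by simp
    then obtain z1 z2 where z: "(x1, z1) \<in> R" "(x2, z2) \<in> R" "z1 \<otimes> z2 = y1 \<otimes> y2"
      using lift x1 x2 by blast
    then have zc: "z1 \<in> carrier P" "z2 \<in> carrier P"
      using mon_congruence_carrier[OF R] by auto
    obtain a b c d where abcd: "a \<in> carrier P" "b \<in> carrier P" "c \<in> carrier P" "d \<in> carrier P"
      "z1 = a \<otimes> b" "z2 = c \<otimes> d" "y1 = a \<otimes> c" "y2 = b \<otimes> d"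
      by (rule refinementE[OF ref zc y1(1) y2(1) z(3)])
    have "X1 = R `` {z1}" "X2 = R `` {z2}"
      using x1 x2 zc z mon_congruence_class_eq[OF R] by auto
    then have "X1 = R `` {a} \<otimes>\<^bsub>?Q\<^esub> R `` {b}" "X2 = R `` {c} \<otimes>\<^bsub>?Q\<^esub> R `` {d}"
      "Y1 = R `` {a} \<otimes>\<^bsub>?Q\<^esub> R `` {c}" "Y2 = R `` {b} \<otimes>\<^bsub>?Q\<^esub> R `` {d}"
      using y1 y2 abcd by (simp_all add: quot_mult_class[OF R])
    moreover have "R `` {a} \<in> carrier ?Q" "R `` {b} \<in> carrier ?Q" "R `` {c} \<in> carrier ?Q"
      "R `` {d} \<in> carrier ?Q"
      using abcd(1-4) by (simp_all add: quot_class_closed)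
    ultimately show ?thesis by blast
  qed
  then show ?thesis
    unfolding refinement_monoid_def
    using quot_comm_monoid[OF comm_monoid_axioms R] by blast
qed

lemma order_ideal_subset: "order_ideal P I \<Longrightarrow> I \<subseteq> carrier P"
  by (simp add: order_ideal_def)

lemma order_ideal_mult_iff:
  "order_ideal P I \<Longrightarrow> x \<in> carrier P \<Longrightarrow> y \<in> carrier P \<Longrightarrow>
    x \<otimes>\<^bsub>P\<^esub> y \<in> I \<longleftrightarrow> x \<in> I \<and> y \<in> I"
  by (simp add: order_ideal_def)

lemma order_ideal_one:
  assumes I: "order_ideal P I" and P: "monoid P"
  shows "\<one>\<^bsub>P\<^esub> \<in> I"
proof -
  obtain i where i: "i \<in> I" using I unfolding order_ideal_def by auto
  then have "i \<in> carrier P" using order_ideal_subset[OF I] by auto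
  then show ?thesis
    using i order_ideal_mult_iff[OF I, of i "\<one>\<^bsub>P\<^esub>"]
    by (simp add: monoid.r_one[OF P] monoid.one_closed[OF P])
qed

text \<open>In a refinement monoid the sum of two order-ideals is an order-ideal; downward
  closure is where refinement is used.\<close>

lemma order_ideal_set_sum:
  fixes P (structure)
  assumes ref: "refinement_monoid P" and I: "order_ideal P I" and J: "order_ideal P J"
  shows "order_ideal P (set_sum P I J)"
proof -
  interpret comm_monoid P using ref by (simp add: refinement_monoid_def)
  have IJ: "I \<subseteq> carrier P" "J \<subseteq> carrier P"
    using I J order_ideal_subset by auto
  have down: "x \<in> set_sum P I J \<and> y \<in> set_sum P I J"
    if x: "x \<in> carrier P" and y: "y \<in> carrier P" and xy: "x \<otimes> y \<in> set_sum P I J" for x y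
  proof -
    obtain i j where ij: "i \<in> I" "j \<in> J" "x \<otimes> y = i \<otimes> j"
      using xy unfolding set_sum_def by blast
    have "i \<in> carrier P" "j \<in> carrier P" using IJ ij by auto
    then obtain a b c d where abcd: "a \<in> carrier P" "b \<in> carrier P" "c \<in> carrier P" "d \<in> carrier P"
      "x = a \<otimes> b" "y = c \<otimes> d" "i = a \<otimes> c" "j = b \<otimes> d"
      by (rule refinementE[OF ref x y _ _ ij(3)])
    then have "a \<in> I" "c \<in> I" "b \<in> J" "d \<in> J"
      using ij order_ideal_mult_iff[OF I] order_ideal_mult_iff[OF J] by auto
    then show ?thesis
      unfolding set_sum_def using abcd by blast
  qed
  have up: "x \<otimes> y \<in> set_sum P I J"
    if xy: "x \<in> set_sum P I J" "y \<in> set_sum P I J" for x y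
  proof -
    obtain a b c d where abcd: "a \<in> I" "b \<in> J" "c \<in> I" "d \<in> J" "x = a \<otimes> b" "y = c \<otimes> d"
      using xy unfolding set_sum_def by blast
    then have cs: "a \<in> carrier P" "b \<in> carrier P" "c \<in> carrier P" "d \<in> carrier P"
      using IJ by auto
    then have "x \<otimes> y = (a \<otimes> c) \<otimes> (b \<otimes> d)"
      using abcd(5,6) by (simp add: m_ac)
    moreover have "a \<otimes> c \<in> I" "b \<otimes> d \<in> J"
      using abcd(1-4) cs order_ideal_mult_iff[OF I] order_ideal_mult_iff[OF J] by auto
    ultimately show ?thesis
      unfolding set_sum_def by blast
  qed
  have "\<one> \<otimes> \<one> \<in> set_sum P I J"
    unfolding set_sum_def using order_ideal_one[OF I] order_ideal_one[OF J] monoid_axioms by blast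
  moreover have "set_sum P I J \<subseteq> carrier P"
    unfolding set_sum_def using IJ by auto
  ultimately show ?thesis
    unfolding order_ideal_def using down up by blast
qed

lemma order_ideal_congruence:
  assumes P: "comm_monoid P" and I: "order_ideal P I"
  shows "mon_congruence P (ideal_rel P I)"
proof (rule ideal_rel_congruence[OF P])
  show sub: "I \<subseteq> carrier P" by (rule order_ideal_subset[OF I])
  show "\<one>\<^bsub>P\<^esub> \<in> I" by (rule order_ideal_one[OF I comm_monoid.axioms(1)[OF P]])
  show "a \<otimes>\<^bsub>P\<^esub> b \<in> I" if "a \<in> I" "b \<in> I" for a b
    using that sub order_ideal_mult_iff[OF I, of a b] by auto
qed

section \<open>The crowned pushout\<close>

locale crown_setting = comm_monoid P for P (structure) +
  fixes I I' :: "'a set" and \<phi> :: "'a \<Rightarrow> 'a"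
  assumes conical: "conical P" and refinement: "refinement_monoid P"
    and ideal_I: "order_ideal P I" and ideal_I': "order_ideal P I'"
    and disjoint: "I \<inter> I' = {\<one>}"
    and phi_iso: "\<phi> \<in> iso (P\<lparr>carrier := I\<rparr>) (P\<lparr>carrier := I'\<rparr>)"
begin

lemma I_carrier: "i \<in> I \<Longrightarrow> i \<in> carrier P"
  and I'_carrier: "i \<in> I' \<Longrightarrow> i \<in> carrier P"
  using order_ideal_subset[OF ideal_I] order_ideal_subset[OF ideal_I'] by auto

lemma one_I: "\<one> \<in> I" and one_I': "\<one> \<in> I'"
  using order_ideal_one[OF ideal_I] order_ideal_one[OF ideal_I'] monoid_axioms by auto

lemma I_mult_iff: "x \<in> carrier P \<Longrightarrow> y \<in> carrier P \<Longrightarrow> x \<otimes> y \<in> I \<longleftrightarrow> x \<in> I \<and> y \<in> I"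
  and I'_mult_iff: "x \<in> carrier P \<Longrightarrow> y \<in> carrier P \<Longrightarrow> x \<otimes> y \<in> I' \<longleftrightarrow> x \<in> I' \<and> y \<in> I'"
  using order_ideal_mult_iff[OF ideal_I] order_ideal_mult_iff[OF ideal_I'] by auto

lemma phi_in: "i \<in> I \<Longrightarrow> \<phi> i \<in> I'"
  and phi_mult: "i \<in> I \<Longrightarrow> j \<in> I \<Longrightarrow> \<phi> (i \<otimes> j) = \<phi> i \<otimes> \<phi> j"
  and phi_bij: "bij_betw \<phi> I I'"
  using phi_iso unfolding iso_def hom_def by auto

text \<open>An isomorphism of the order-ideals preserves \<open>0\<close> (this is not part of \<open>hom\<close> in
  HOL-Algebra, so it is derived from surjectivity).\<close>

lemma phi_one: "\<phi> \<one> = \<one>"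
proof -
  obtain j where j: "j \<in> I" "\<phi> j = \<one>"
    using phi_bij one_I' unfolding bij_betw_def by (metis imageE)
  have "\<phi> \<one> = \<phi> \<one> \<otimes> \<phi> j" using j phi_in[OF one_I] I'_carrier by simp
  also have "\<dots> = \<phi> j" using phi_mult[OF one_I j(1)] I_carrier[OF j(1)] by simp
  finally show ?thesis using j by simp
qed

definition phi_inv :: "'a \<Rightarrow> 'a" where
  "phi_inv = inv_into I \<phi>"

lemma phi_inv_in: "i \<in> I' \<Longrightarrow> phi_inv i \<in> I"
  and phi_phi_inv: "i \<in> I' \<Longrightarrow> \<phi> (phi_inv i) = i"
  and phi_inv_phi: "i \<in> I \<Longrightarrow> phi_inv (\<phi> i) = i"
  unfolding phi_inv_def using phi_bij
  by (auto simp: bij_betw_inv_into_left bij_betw_inv_into_right bij_betw_def inv_into_into)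

lemma phi_inv_mult:
  assumes "i \<in> I'" "j \<in> I'"
  shows "phi_inv (i \<otimes> j) = phi_inv i \<otimes> phi_inv j"
proof -
  have "phi_inv i \<otimes> phi_inv j \<in> I"
    using assms phi_inv_in I_mult_iff I_carrier by auto
  moreover have "\<phi> (phi_inv i \<otimes> phi_inv j) = i \<otimes> j"
    using assms phi_mult phi_inv_in phi_phi_inv by simp
  ultimately show ?thesis
    using phi_inv_phi by metis
qed

text \<open>Refinement and \<open>I \<inter> I' = 0\<close> make the decomposition of an element of \<open>I + I'\<close>
  unique; this is what makes the collapsing map below well defined.\<close>

lemma sum_decomposition_unique:
  assumes "a \<in> I" "b \<in> I" "a' \<in> I'" "b' \<in> I'" "a \<otimes> a' = b \<otimes> b'"
  shows "a = b \<and> a' = b'"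
proof -
  obtain c11 c12 c21 c22 where c: "c11 \<in> carrier P" "c12 \<in> carrier P" "c21 \<in> carrier P"
    "c22 \<in> carrier P" "a = c11 \<otimes> c12" "a' = c21 \<otimes> c22" "b = c11 \<otimes> c21" "b' = c12 \<otimes> c22"
    by (rule refinementE[OF refinement I_carrier[OF assms(1)] I'_carrier[OF assms(3)]
          I_carrier[OF assms(2)] I'_carrier[OF assms(4)] assms(5)])
  then have "c12 \<in> I \<inter> I'" "c21 \<in> I \<inter> I'"
    using assms I_mult_iff I'_mult_iff by auto
  then show ?thesis using c disjoint by simp
qed

abbreviation S :: "'a set" where
  "S \<equiv> set_sum P I I'"

lemma S_ideal: "order_ideal P S"
  by (rule order_ideal_set_sum[OF refinement ideal_I ideal_I'])

lemma S_carrier: "u \<in> S \<Longrightarrow> u \<in> carrier P"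
  using order_ideal_subset[OF S_ideal] by auto

lemma S_mult_iff: "x \<in> carrier P \<Longrightarrow> y \<in> carrier P \<Longrightarrow> x \<otimes> y \<in> S \<longleftrightarrow> x \<in> S \<and> y \<in> S"
  by (rule order_ideal_mult_iff[OF S_ideal])

lemma SE:
  assumes "u \<in> S"
  obtains a a' where "a \<in> I" "a' \<in> I'" "u = a \<otimes> a'"
  using assms unfolding set_sum_def by blast

text \<open>The collapsing map \<open>I + I' \<rightarrow> I\<close>, \<open>a + a' \<mapsto> a + \<phi>\<^sup>-\<^sup>1(a')\<close>; two elements of \<open>I + I'\<close>
  are identified in the crowned pushout exactly when their collapses agree.\<close>

definition collapse :: "'a \<Rightarrow> 'a" where
  "collapse u = (THE v. \<exists>a a'. a \<in> I \<and> a' \<in> I' \<and> u = a \<otimes> a' \<and> v = a \<otimes> phi_inv a')"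

lemma collapse_eq: "a \<in> I \<Longrightarrow> a' \<in> I' \<Longrightarrow> collapse (a \<otimes> a') = a \<otimes> phi_inv a'"
  unfolding collapse_def
  by (rule the_equality) (use sum_decomposition_unique in blast)+

lemma collapse_in_I: "u \<in> S \<Longrightarrow> collapse u \<in> I"
  by (erule SE) (auto simp: collapse_eq I_mult_iff phi_inv_in I_carrier)

lemma collapse_carrier: "u \<in> S \<Longrightarrow> collapse u \<in> carrier P"
  using collapse_in_I I_carrier by blast

lemma collapse_I: "i \<in> I \<Longrightarrow> collapse i = i"
  using collapse_eq[OF _ one_I'] phi_inv_phi[OF one_I] phi_one I_carrier by simp

lemma collapse_I': "i \<in> I' \<Longrightarrow> collapse i = phi_inv i"
  using collapse_eq[OF one_I] phi_inv_in I_carrier I'_carrier by simp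

lemma I_subset_S: "I \<subseteq> S" and I'_subset_S: "I' \<subseteq> S"
proof -
  show "I \<subseteq> S" unfolding set_sum_def using one_I' I_carrier by force
  show "I' \<subseteq> S" unfolding set_sum_def using one_I I'_carrier by force
qed

lemma collapse_mult:
  assumes "u \<in> S" "v \<in> S"
  shows "collapse (u \<otimes> v) = collapse u \<otimes> collapse v"
proof -
  obtain a a' where u: "a \<in> I" "a' \<in> I'" "u = a \<otimes> a'" using assms(1) by (rule SE)
  obtain b b' where v: "b \<in> I" "b' \<in> I'" "v = b \<otimes> b'" using assms(2) by (rule SE)
  have c: "a \<in> carrier P" "a' \<in> carrier P" "b \<in> carrier P" "b' \<in> carrier P"
    "phi_inv a' \<in> carrier P" "phi_inv b' \<in> carrier P"
    using u v I_carrier I'_carrier phi_inv_in by auto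
  have ab: "a \<otimes> b \<in> I" "a' \<otimes> b' \<in> I'"
    using u v c I_mult_iff I'_mult_iff by auto
  have "u \<otimes> v = (a \<otimes> b) \<otimes> (a' \<otimes> b')" using u v c by (simp add: m_ac)
  then have "collapse (u \<otimes> v) = (a \<otimes> b) \<otimes> (phi_inv a' \<otimes> phi_inv b')"
    using collapse_eq[OF ab] phi_inv_mult u v by simp
  also have "\<dots> = (a \<otimes> phi_inv a') \<otimes> (b \<otimes> phi_inv b')" using c by (simp add: m_ac)
  finally show ?thesis using u v collapse_eq by simp
qed

text \<open>Splittings of the collapse of \<open>v\<close> lift to splittings of \<open>v\<close> inside \<open>I + I'\<close>
  (needed to lift splittings along the crown congruence).\<close>

lemma collapse_split:
  assumes v: "v \<in> S" and s: "s1 \<in> I" "s2 \<in> I" "collapse v = s1 \<otimes> s2"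
  obtains v1 v2 where "v1 \<in> S" "v2 \<in> S" "v = v1 \<otimes> v2" "collapse v1 = s1" "collapse v2 = s2"
proof -
  obtain b b' where b: "b \<in> I" "b' \<in> I'" "v = b \<otimes> b'" using v by (rule SE)
  have eq: "b \<otimes> phi_inv b' = s1 \<otimes> s2" using s b collapse_eq by simp
  have "b \<in> carrier P" "phi_inv b' \<in> carrier P" "s1 \<in> carrier P" "s2 \<in> carrier P"
    using b s phi_inv_in I_carrier by auto
  then obtain c11 c12 c21 c22 where c: "c11 \<in> carrier P" "c12 \<in> carrier P" "c21 \<in> carrier P"
    "c22 \<in> carrier P" "b = c11 \<otimes> c12" "phi_inv b' = c21 \<otimes> c22" "s1 = c11 \<otimes> c21" "s2 = c12 \<otimes> c22"
    using refinementE[OF refinement _ _ _ _ eq] by blast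
  have cI: "c11 \<in> I" "c12 \<in> I" "c21 \<in> I" "c22 \<in> I"
    using c b s phi_inv_in I_mult_iff by auto
  have b': "b' = \<phi> c21 \<otimes> \<phi> c22"
    using phi_phi_inv[OF b(2)] c(6) phi_mult[OF cI(3,4)] by simp
  have pc: "\<phi> c21 \<in> I'" "\<phi> c22 \<in> I'" using phi_in cI by auto
  show ?thesis
  proof
    show "c11 \<otimes> \<phi> c21 \<in> S" "c12 \<otimes> \<phi> c22 \<in> S" unfolding set_sum_def using cI pc by auto
    show "v = c11 \<otimes> \<phi> c21 \<otimes> (c12 \<otimes> \<phi> c22)"
      using b b' c pc I'_carrier by (simp add: m_ac)
    show "collapse (c11 \<otimes> \<phi> c21) = s1" "collapse (c12 \<otimes> \<phi> c22) = s2"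
      using collapse_eq cI pc phi_inv_phi c by auto
  qed
qed

text \<open>Explicit description of the congruence generated by \<open>x + i \<sim> x + \<phi>(i)\<close>:
  \<open>p + u \<sim> p + v\<close> for \<open>u, v \<in> I + I'\<close> with equal collapses.\<close>

definition collapse_rel :: "('a \<times> 'a) set" where
  "collapse_rel = {(p \<otimes> u, p \<otimes> v) | p u v.
     p \<in> carrier P \<and> u \<in> S \<and> v \<in> S \<and> collapse u = collapse v}"

lemma collapse_relI:
  "p \<in> carrier P \<Longrightarrow> u \<in> S \<Longrightarrow> v \<in> S \<Longrightarrow> collapse u = collapse v \<Longrightarrow> (p \<otimes> u, p \<otimes> v) \<in> collapse_rel"
  unfolding collapse_rel_def by blast

lemma collapse_relE:
  assumes "(x, y) \<in> collapse_rel"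
  obtains p u v where "p \<in> carrier P" "u \<in> S" "v \<in> S" "collapse u = collapse v"
    "x = p \<otimes> u" "y = p \<otimes> v"
  using assms unfolding collapse_rel_def by blast

lemma collapse_rel_carrier: "(x, y) \<in> collapse_rel \<Longrightarrow> x \<in> carrier P \<and> y \<in> carrier P"
  by (erule collapse_relE) (simp add: S_carrier)

lemma collapse_rel_collapse: "u \<in> S \<Longrightarrow> (u, collapse u) \<in> collapse_rel"
  using collapse_relI[OF one_closed, of u "collapse u"] I_subset_S collapse_in_I collapse_I
    S_carrier collapse_carrier by auto

text \<open>Transitivity is the substantial point: refine the common middle term \<open>p + v = q + w\<close>
  and move the pieces lying in \<open>I + I'\<close> from the coefficients into the \<open>I + I'\<close> parts.\<close>

lemma collapse_rel_trans:
  assumes "(x, y) \<in> collapse_rel" "(y, z) \<in> collapse_rel"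
  shows "(x, z) \<in> collapse_rel"
proof -
  obtain p u v where 1: "p \<in> carrier P" "u \<in> S" "v \<in> S" "collapse u = collapse v"
    "x = p \<otimes> u" "y = p \<otimes> v"
    using assms(1) by (rule collapse_relE)
  obtain q w t where 2: "q \<in> carrier P" "w \<in> S" "t \<in> S" "collapse w = collapse t"
    "y = q \<otimes> w" "z = q \<otimes> t"
    using assms(2) by (rule collapse_relE)
  have "p \<otimes> v = q \<otimes> w" using 1(6) 2(5) by simp
  then obtain r11 r12 r21 r22 where r: "r11 \<in> carrier P" "r12 \<in> carrier P" "r21 \<in> carrier P"
    "r22 \<in> carrier P" "p = r11 \<otimes> r12" "v = r21 \<otimes> r22" "q = r11 \<otimes> r21" "w = r12 \<otimes> r22"
    by (rule refinementE[OF refinement 1(1) S_carrier[OF 1(3)] 2(1) S_carrier[OF 2(2)]])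
  have rS: "r12 \<in> S" "r21 \<in> S" "r22 \<in> S"
    using r 1(3) 2(2) S_mult_iff by auto
  have c: "u \<in> carrier P" "t \<in> carrier P" "collapse r12 \<in> carrier P" "collapse r21 \<in> carrier P"
    "collapse r22 \<in> carrier P"
    using 1(2) 2(3) rS S_carrier collapse_carrier by auto
  have "x = r11 \<otimes> (r12 \<otimes> u)" "z = r11 \<otimes> (r21 \<otimes> t)"
    using 1(5) 2(6) r c by (simp_all add: m_assoc)
  moreover have "r12 \<otimes> u \<in> S" "r21 \<otimes> t \<in> S"
    using rS 1(2) 2(3) c r S_mult_iff by auto
  moreover have "collapse (r12 \<otimes> u) = collapse (r21 \<otimes> t)"
  proof -
    have "collapse (r12 \<otimes> u) = collapse r12 \<otimes> (collapse r21 \<otimes> collapse r22)"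
      using collapse_mult rS 1(2,4) r(6) by simp
    also have "\<dots> = collapse r21 \<otimes> (collapse r12 \<otimes> collapse r22)"
      using c by (simp add: m_lcomm)
    also have "\<dots> = collapse (r21 \<otimes> t)"
      using collapse_mult rS 2(3,4) r(8) by simp
    finally show ?thesis .
  qed
  ultimately show ?thesis
    using collapse_relI r(1) by simp
qed

lemma collapse_rel_congruence: "mon_congruence P collapse_rel"
  unfolding mon_congruence_def
proof (intro conjI)
  show "equiv (carrier P) collapse_rel"
  proof (rule equivI)
    show "collapse_rel \<subseteq> carrier P \<times> carrier P" using collapse_rel_carrier by auto
    show "refl_on (carrier P) collapse_rel"
      using collapse_relI[OF _ I_subset_S[THEN subsetD, OF one_I] I_subset_S[THEN subsetD, OF one_I]]
      unfolding refl_on_def by force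
    show "sym collapse_rel"
      unfolding sym_def by (auto elim!: collapse_relE intro!: collapse_relI)
    show "trans collapse_rel"
      unfolding trans_def using collapse_rel_trans by blast
  qed
  show "\<forall>(a, b)\<in>collapse_rel. \<forall>c\<in>carrier P. (a \<otimes> c, b \<otimes> c) \<in> collapse_rel \<and> (c \<otimes> a, c \<otimes> b) \<in> collapse_rel"
  proof (clarify)
    fix a b c assume ab: "(a, b) \<in> collapse_rel" and c: "c \<in> carrier P"
    obtain p u v where h: "p \<in> carrier P" "u \<in> S" "v \<in> S" "collapse u = collapse v"
      "a = p \<otimes> u" "b = p \<otimes> v"
      using ab by (rule collapse_relE)
    then have "a \<otimes> c = (c \<otimes> p) \<otimes> u" "b \<otimes> c = (c \<otimes> p) \<otimes> v"
      "c \<otimes> a = (c \<otimes> p) \<otimes> u" "c \<otimes> b = (c \<otimes> p) \<otimes> v"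
      using c S_carrier by (simp_all add: m_ac)
    then show "(a \<otimes> c, b \<otimes> c) \<in> collapse_rel \<and> (c \<otimes> a, c \<otimes> b) \<in> collapse_rel"
      using collapse_relI h c by simp
  qed
qed

definition generators :: "('a \<times> 'a) set" where
  "generators = {(x \<otimes> i, x \<otimes> \<phi> i) | x i. x \<in> carrier P \<and> i \<in> I}"

lemma generators_subset: "generators \<subseteq> collapse_rel"
proof clarify
  fix a b assume "(a, b) \<in> generators"
  then obtain x i where h: "x \<in> carrier P" "i \<in> I" "a = x \<otimes> i" "b = x \<otimes> \<phi> i"
    unfolding generators_def by blast
  have "i \<in> S" "\<phi> i \<in> S"
    using I_subset_S I'_subset_S phi_in h(2) by auto
  moreover have "collapse i = collapse (\<phi> i)"
    using collapse_I collapse_I' phi_in phi_inv_phi h(2) by simp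
  ultimately show "(a, b) \<in> collapse_rel"
    using collapse_relI[OF h(1)] h(3,4) by simp
qed

text \<open>Every congruence containing the generators identifies \<open>u\<close> with its collapse,
  hence contains \<open>collapse_rel\<close>.\<close>

lemma collapse_rel_least:
  assumes R: "mon_congruence P R" "generators \<subseteq> R"
  shows "collapse_rel \<subseteq> R"
proof -
  have eqv: "equiv (carrier P) R" by (rule mon_congruence_equiv[OF R(1)])
  have refl: "(x, x) \<in> R" if "x \<in> carrier P" for x
    using eqv that by (meson equiv_def refl_onD)
  have sym: "(y, x) \<in> R" if "(x, y) \<in> R" for x y
    using eqv that by (meson equiv_def symD)
  have "(phi_inv a', a') \<in> R" if a': "a' \<in> I'" for a'
  proof -
    have "(\<one> \<otimes> phi_inv a', \<one> \<otimes> \<phi> (phi_inv a')) \<in> R"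
      using R(2) phi_inv_in[OF a'] unfolding generators_def by blast
    then show ?thesis
      using phi_phi_inv[OF a'] I_carrier[OF phi_inv_in[OF a']] I'_carrier[OF a'] by simp
  qed
  then have "(a \<otimes> a', a \<otimes> phi_inv a') \<in> R" if "a \<in> I" "a' \<in> I'" for a a'
    using mon_congruence_mult[OF R(1) refl[OF I_carrier] sym] that by blast
  then have to_collapse: "(u, collapse u) \<in> R" if "u \<in> S" for u
    using that collapse_eq by (auto elim: SE)
  show ?thesis
  proof clarify
    fix x y assume "(x, y) \<in> collapse_rel"
    then obtain p u v where h: "p \<in> carrier P" "u \<in> S" "v \<in> S" "collapse u = collapse v"
      "x = p \<otimes> u" "y = p \<otimes> v"
      by (rule collapse_relE)
    have "(p \<otimes> u, p \<otimes> collapse u) \<in> R" "(p \<otimes> v, p \<otimes> collapse v) \<in> R"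
      using mon_congruence_mult[OF R(1) refl[OF h(1)] to_collapse] h(2,3) by auto
    then show "(x, y) \<in> R"
      using h eqv by (metis equiv_def symD transD)
  qed
qed

lemma crown_rel_eq: "crown_rel P I \<phi> = collapse_rel"
  unfolding crown_rel_def generators_def[symmetric]
  using gen_congruence_eqI[OF collapse_rel_congruence generators_subset collapse_rel_least] .

abbreviation Q :: "'a set monoid" where
  "Q \<equiv> quot_monoid P collapse_rel"

abbreviation proj :: "'a \<Rightarrow> 'a set" where
  "proj x \<equiv> collapse_rel `` {x}"

lemma Q_comm_monoid: "comm_monoid Q"
  by (rule quot_comm_monoid[OF comm_monoid_axioms collapse_rel_congruence])

lemma proj_hom: "(\<lambda>x. proj x) \<in> hom P Q"
  by (rule quot_proj_hom[OF collapse_rel_congruence monoid_axioms])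

lemma proj_mult: "x \<in> carrier P \<Longrightarrow> y \<in> carrier P \<Longrightarrow> proj x \<otimes>\<^bsub>Q\<^esub> proj y = proj (x \<otimes> y)"
  by (rule quot_mult_class[OF collapse_rel_congruence])

lemma proj_eq_iff: "x \<in> carrier P \<Longrightarrow> y \<in> carrier P \<Longrightarrow> proj x = proj y \<longleftrightarrow> (x, y) \<in> collapse_rel"
  by (rule mon_congruence_class_eq[OF collapse_rel_congruence])

lemma proj_collapse: "u \<in> S \<Longrightarrow> proj u = proj (collapse u)"
  using collapse_rel_collapse proj_eq_iff S_carrier collapse_carrier by simp

text \<open>Refinement passes to \<open>Q\<close> because a splitting of a related element lifts along the relation.\<close>

lemma collapse_rel_lift:
  assumes x: "x1 \<in> carrier P" "x2 \<in> carrier P" and r: "(x1 \<otimes> x2, y) \<in> collapse_rel"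
  shows "\<exists>z1 z2. (x1, z1) \<in> collapse_rel \<and> (x2, z2) \<in> collapse_rel \<and> z1 \<otimes> z2 = y"
proof -
  obtain p u v where 1: "p \<in> carrier P" "u \<in> S" "v \<in> S" "collapse u = collapse v"
    "x1 \<otimes> x2 = p \<otimes> u" "y = p \<otimes> v"
    using r by (rule collapse_relE)
  obtain p1 e1 p2 e2 where 2: "p1 \<in> carrier P" "e1 \<in> carrier P" "p2 \<in> carrier P" "e2 \<in> carrier P"
    "x1 = p1 \<otimes> e1" "x2 = p2 \<otimes> e2" "p = p1 \<otimes> p2" "u = e1 \<otimes> e2"
    by (rule refinementE[OF refinement x 1(1) S_carrier[OF 1(2)] 1(5)])
  have e: "e1 \<in> S" "e2 \<in> S" using 1(2) 2 S_mult_iff by auto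
  have "collapse v = collapse e1 \<otimes> collapse e2" using 1(4) 2(8) collapse_mult[OF e] by simp
  then obtain v1 v2 where 3: "v1 \<in> S" "v2 \<in> S" "v = v1 \<otimes> v2"
      "collapse v1 = collapse e1" "collapse v2 = collapse e2"
    using collapse_split[OF 1(3) collapse_in_I[OF e(1)] collapse_in_I[OF e(2)]] by blast
  have "(x1, p1 \<otimes> v1) \<in> collapse_rel" "(x2, p2 \<otimes> v2) \<in> collapse_rel"
    using collapse_relI 2 3 e by auto
  moreover have "(p1 \<otimes> v1) \<otimes> (p2 \<otimes> v2) = y"
    using 1(6) 2 3 S_carrier by (simp add: m_ac)
  ultimately show ?thesis by blast
qed

lemma Q_refinement: "refinement_monoid Q"
  by (rule quot_refinement[OF refinement collapse_rel_congruence collapse_rel_lift])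

text \<open>Conicality of \<open>P\<close> makes the collapse reflect zero, and this gives conicality of \<open>Q\<close>.\<close>

lemma conicalD: "x \<in> carrier P \<Longrightarrow> y \<in> carrier P \<Longrightarrow> x \<otimes> y = \<one> \<Longrightarrow> x = \<one> \<and> y = \<one>"
  using conical unfolding conical_def by blast

lemma collapse_eq_one:
  assumes "u \<in> S" "collapse u = \<one>"
  shows "u = \<one>"
proof -
  obtain a a' where h: "a \<in> I" "a' \<in> I'" "u = a \<otimes> a'" using assms(1) by (rule SE)
  then have "a \<otimes> phi_inv a' = \<one>" using assms(2) collapse_eq by simp
  then have "a = \<one>" "phi_inv a' = \<one>"
    using conicalD I_carrier phi_inv_in h by auto
  then show ?thesis
    using h phi_phi_inv[OF h(2)] phi_one by auto
qed

lemma Q_conical: "conical Q"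
  unfolding conical_def
proof (intro ballI impI)
  fix A B assume A: "A \<in> carrier Q" and B: "B \<in> carrier Q" and eq: "A \<otimes>\<^bsub>Q\<^esub> B = \<one>\<^bsub>Q\<^esub>"
  obtain x where x: "x \<in> carrier P" "A = proj x" using A by (rule quot_cases)
  obtain y where y: "y \<in> carrier P" "B = proj y" using B by (rule quot_cases)
  have "proj (x \<otimes> y) = proj \<one>" using eq x y proj_mult quot_one by simp
  then have "(x \<otimes> y, \<one>) \<in> collapse_rel" using proj_eq_iff x y by simp
  then obtain p u v where h: "p \<in> carrier P" "u \<in> S" "v \<in> S" "collapse u = collapse v"
    "x \<otimes> y = p \<otimes> u" "\<one> = p \<otimes> v"
    by (rule collapse_relE)
  have "p = \<one>" "v = \<one>" using conicalD[OF h(1) S_carrier[OF h(3)] h(6)[symmetric]] by auto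
  then have "u = \<one>"
    using collapse_eq_one h(2,4) collapse_I one_I by simp
  then have "x = \<one> \<and> y = \<one>"
    using conicalD[OF x(1) y(1)] h(5) \<open>p = \<one>\<close> by simp
  then show "A = \<one>\<^bsub>Q\<^esub> \<and> B = \<one>\<^bsub>Q\<^esub>" using x y quot_one[of P collapse_rel] by simp
qed

abbreviation Z :: "'a set set" where
  "Z \<equiv> proj ` I"

lemma proj_in_Z_iff:
  assumes x: "x \<in> carrier P"
  shows "proj x \<in> Z \<longleftrightarrow> x \<in> S"
proof
  assume "proj x \<in> Z"
  then obtain i where i: "i \<in> I" "proj x = proj i" by auto
  then have "(x, i) \<in> collapse_rel" using proj_eq_iff x I_carrier by simp
  then obtain p u v where h: "p \<in> carrier P" "u \<in> S" "v \<in> S" "x = p \<otimes> u" "i = p \<otimes> v"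
    by (rule collapse_relE)
  then have "p \<in> S" using i(1) I_mult_iff I_subset_S S_carrier by auto
  then show "x \<in> S" using h S_mult_iff S_carrier by simp
next
  assume "x \<in> S"
  then show "proj x \<in> Z" using proj_collapse collapse_in_I by auto
qed

lemma Z_order_ideal: "order_ideal Q Z"
  unfolding order_ideal_def
proof (intro conjI ballI)
  show "Z \<subseteq> carrier Q" using I_carrier by (auto simp: quot_class_closed)
  show "Z \<noteq> {}" using one_I by blast
  fix A B assume A: "A \<in> carrier Q" and B: "B \<in> carrier Q"
  obtain x where x: "x \<in> carrier P" "A = proj x" using A by (rule quot_cases)
  obtain y where y: "y \<in> carrier P" "B = proj y" using B by (rule quot_cases)
  show "A \<otimes>\<^bsub>Q\<^esub> B \<in> Z \<longleftrightarrow> A \<in> Z \<and> B \<in> Z"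
    using x y proj_mult proj_in_Z_iff S_mult_iff by simp
qed

text \<open>The projection maps \<open>I\<close> isomorphically onto \<open>Z\<close>: two related elements of \<open>I\<close> differ
  by elements of \<open>I\<close>, on which the collapse is the identity.\<close>

lemma Z_iso: "(\<lambda>x. proj x) \<in> iso (P\<lparr>carrier := I\<rparr>) (Q\<lparr>carrier := Z\<rparr>)"
proof (rule isoI)
  show "(\<lambda>x. proj x) \<in> hom (P\<lparr>carrier := I\<rparr>) (Q\<lparr>carrier := Z\<rparr>)"
    by (rule homI) (auto simp: proj_mult I_carrier)
  have "inj_on (\<lambda>x. proj x) I"
  proof (rule inj_onI)
    fix i j assume ij: "i \<in> I" "j \<in> I" "proj i = proj j"
    then have "(i, j) \<in> collapse_rel" using proj_eq_iff I_carrier by simp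
    then obtain p u v where h: "p \<in> carrier P" "u \<in> S" "v \<in> S" "collapse u = collapse v"
      "i = p \<otimes> u" "j = p \<otimes> v"
      by (rule collapse_relE)
    then have "u \<in> I" "v \<in> I" using ij I_mult_iff S_carrier by auto
    then show "i = j" using h collapse_I by simp
  qed
  then show "bij_betw (\<lambda>x. proj x) (carrier (P\<lparr>carrier := I\<rparr>)) (carrier (Q\<lparr>carrier := Z\<rparr>))"
    by (simp add: bij_betw_def)
qed

lemma collapse_rel_subset_ideal_rel: "collapse_rel \<subseteq> ideal_rel P S"
proof clarify
  fix x y assume "(x, y) \<in> collapse_rel"
  then obtain p u v where h: "p \<in> carrier P" "u \<in> S" "v \<in> S" "x = p \<otimes> u" "y = p \<otimes> v"
    by (rule collapse_relE)
  then have "x \<otimes> v = y \<otimes> u" using S_carrier by (simp add: m_ac)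
  then show "(x, y) \<in> ideal_rel P S"
    unfolding ideal_rel_def using h S_carrier by auto
qed

lemma ideal_rel_reflect:
  assumes x: "x \<in> carrier P" and y: "y \<in> carrier P"
  shows "(x, y) \<in> ideal_rel P S \<longleftrightarrow> (proj x, proj y) \<in> ideal_rel Q Z"
proof
  assume "(x, y) \<in> ideal_rel P S"
  then obtain u v where h: "u \<in> S" "v \<in> S" "x \<otimes> u = y \<otimes> v"
    unfolding ideal_rel_def by blast
  have "proj x \<otimes>\<^bsub>Q\<^esub> proj (collapse u) = proj (x \<otimes> u)"
    using proj_collapse[OF h(1), symmetric] proj_mult[OF x S_carrier[OF h(1)]] by simp
  also have "\<dots> = proj y \<otimes>\<^bsub>Q\<^esub> proj (collapse v)"
    using h(3) proj_collapse[OF h(2), symmetric] proj_mult[OF y S_carrier[OF h(2)]] by simp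
  finally have eq: "proj x \<otimes>\<^bsub>Q\<^esub> proj (collapse u) = proj y \<otimes>\<^bsub>Q\<^esub> proj (collapse v)" .
  have "proj x \<in> carrier Q" "proj y \<in> carrier Q" "proj (collapse u) \<in> Z" "proj (collapse v) \<in> Z"
    using x y h collapse_in_I by (auto simp: quot_class_closed)
  then show "(proj x, proj y) \<in> ideal_rel Q Z"
    unfolding ideal_rel_def using eq by blast
next
  assume "(proj x, proj y) \<in> ideal_rel Q Z"
  then obtain i j where ij: "i \<in> I" "j \<in> I" "proj x \<otimes>\<^bsub>Q\<^esub> proj i = proj y \<otimes>\<^bsub>Q\<^esub> proj j"
    unfolding ideal_rel_def by blast
  have E: "mon_congruence P (ideal_rel P S)"
    by (rule order_ideal_congruence[OF comm_monoid_axioms S_ideal])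
  have "(x \<otimes> i, y \<otimes> j) \<in> collapse_rel"
    using ij x y proj_mult proj_eq_iff I_carrier by simp
  then have "(x \<otimes> i, y \<otimes> j) \<in> ideal_rel P S"
    using collapse_rel_subset_ideal_rel by blast
  moreover have "(x \<otimes> i, x) \<in> ideal_rel P S" "(y \<otimes> j, y) \<in> ideal_rel P S"
    using ideal_rel_absorb[OF monoid_axioms order_ideal_subset[OF S_ideal]] one_I I_subset_S ij x y
    by auto
  ultimately show "(x, y) \<in> ideal_rel P S"
    using mon_congruence_equiv[OF E] by (meson equiv_def symD transD)
qed

lemma quotient_iso:
  "\<exists>\<psi>\<in>iso (ideal_quot P S) (ideal_quot Q Z).
     \<forall>x\<in>carrier P. \<psi> (ideal_rel P S `` {x}) = ideal_rel Q Z `` {proj x}"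
  unfolding ideal_quot_def
proof (rule quot_induced_iso[OF monoid_axioms _ _ proj_hom _ ideal_rel_reflect])
  show "mon_congruence P (ideal_rel P S)"
    by (rule order_ideal_congruence[OF comm_monoid_axioms S_ideal])
  show "mon_congruence Q (ideal_rel Q Z)"
    by (rule order_ideal_congruence[OF Q_comm_monoid Z_order_ideal])
  show "(\<lambda>x. proj x) ` carrier P = carrier Q"
    by (auto simp: quot_carrier_iff)
qed

text \<open>Universal property: a homomorphism identifying each \<open>i \<in> I\<close> with \<open>\<phi>(i)\<close> kills the
  generators, hence all of \<open>collapse_rel\<close>, and so factors uniquely through \<open>Q\<close>.\<close>

lemma Q_universal:
  assumes g: "g \<in> hom P R" and gI: "\<forall>i\<in>I. g i = g (\<phi> i)"
  shows "\<exists>h\<in>hom Q R. (\<forall>x\<in>carrier P. h (proj x) = g x) \<and>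
    (\<forall>h'\<in>hom Q R. (\<forall>x\<in>carrier P. h' (proj x) = g x) \<longrightarrow> (\<forall>A\<in>carrier Q. h' A = h A))"
proof -
  define K where "K = {(x, y). x \<in> carrier P \<and> y \<in> carrier P \<and> g x = g y}"
  have K: "mon_congruence P K"
    unfolding K_def by (rule kernel_congruence[OF monoid_axioms g])
  have "g (x \<otimes> i) = g (x \<otimes> \<phi> i)" if "x \<in> carrier P" "i \<in> I" for x i
    using that gI phi_in hom_mult[OF g] I_carrier I'_carrier by simp
  then have "generators \<subseteq> K"
    unfolding generators_def K_def using I_carrier I'_carrier phi_in by auto
  then have "collapse_rel \<subseteq> K" by (rule collapse_rel_least[OF K])
  then obtain h where h: "h \<in> hom Q R" "\<forall>x\<in>carrier P. h (proj x) = g x"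
    using quot_factor[OF monoid_axioms collapse_rel_congruence g] unfolding K_def by blast
  have "h' A = h A" if "h' \<in> hom Q R" "\<forall>x\<in>carrier P. h' (proj x) = g x" "A \<in> carrier Q" for h' A
    using that h(2) by (auto elim: quot_cases)
  then show ?thesis using h by blast
qed

lemma Q_crowned_pushout: "crowned_pushout TYPE('r) P I I' \<phi> Q (\<lambda>x. proj x)"
proof -
  have "proj i = proj (\<phi> i)" if i: "i \<in> I" for i
  proof -
    have "(\<one> \<otimes> i, \<one> \<otimes> \<phi> i) \<in> collapse_rel"
      using generators_subset i unfolding generators_def by blast
    then show ?thesis using proj_eq_iff i I_carrier I'_carrier phi_in by simp
  qed
  then show ?thesis
    unfolding crowned_pushout_def using phi_in Q_comm_monoid proj_hom Q_universal by blast
qed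

end

theorem mainTheorem9:
  fixes P :: "('a,'b) monoid_scheme" and I I' :: "'a set" and \<phi> :: "'a \<Rightarrow> 'a"
  assumes "comm_monoid P" and "conical P" and "refinement_monoid P"
    and "order_ideal P I" and "order_ideal P I'" and "I \<inter> I' = {\<one>\<^bsub>P\<^esub>}"
    and "\<phi> \<in> iso (P\<lparr>carrier := I\<rparr>) (P\<lparr>carrier := I'\<rparr>)"
  shows "crowned_pushout TYPE('r) P I I' \<phi> (crown_quot P I \<phi>) (crown_proj P I \<phi>)
    \<and> comm_monoid (crown_quot P I \<phi>) \<and> conical (crown_quot P I \<phi>)
    \<and> refinement_monoid (crown_quot P I \<phi>)
    \<and> (\<exists>Z. order_ideal (crown_quot P I \<phi>) Z
          \<and> P\<lparr>carrier := I\<rparr> \<cong> (crown_quot P I \<phi>)\<lparr>carrier := Z\<rparr>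
          \<and> (\<exists>\<psi>\<in>iso (ideal_quot P (set_sum P I I')) (ideal_quot (crown_quot P I \<phi>) Z).
               \<forall>x\<in>carrier P. \<psi> (ideal_rel P (set_sum P I I') `` {x})
                   = ideal_rel (crown_quot P I \<phi>) Z `` {crown_proj P I \<phi> x}))"
proof -
  interpret crown_setting P I I' \<phi>
    using assms by (simp add: crown_setting_def crown_setting_axioms_def)
  have "crown_quot P I \<phi> = Q" and "crown_proj P I \<phi> = (\<lambda>x. proj x)"
    unfolding crown_quot_def crown_proj_def crown_rel_eq by simp_all
  then show ?thesis
    using Q_crowned_pushout Q_comm_monoid Q_conical Q_refinement Z_order_ideal
      is_isoI[OF Z_iso] quotient_iso
    by auto
qed

end
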